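(* For every finite sequence of primes $p_1,\dots,p_h$ there is a finite solvable algebra $\mathbf A$ with a Malcev term such that $\mathsf{nuDet}_{p_1}\circ\cdots\circ\mathsf{nuDet}_{p_h}\subseteq\mathrm{nuP}_{\mathbf A}$.
   Context: A finite algebra has finite universe and finitely many basic operations. An $n$-ary circuit over $\mathbf A$ is a DAG with one output node, sources labelled by variables or constants from $A$, gates labelled by basic operations; size is nodes plus edges. A NuDFA over $\mathbf A$ is $(\{t_n\}_{n\ge1},\iota,S)$ with $t_n$ an $n$-ary circuit, $\iota:\{0,1\}\to A$, $S\subseteq A$, accepting $b\in\{0,1\}^n$ iff $t_n(\iota(b_1),\dots,\iota(b_n))\in S$; polynomial size means size of $t_n$ polynomial in $n$; $\mathrm{nuP}_{\mathbf A}$ is the class of languages over $\{0,1\}$ accepted by polynomial-size NuDFAs over $\mathbf A$. A Malcev term is a ternary term $d$ with $d(x,y,y)=d(y,y,x)=x$; solvability is in the sense of commutator theory. An ABP over $\mathrm{GF}(p)$ is a directed acyclic multigraph with one source and one sink, edges labelled by variables or constants of $\mathrm{GF}(p)$; it computes the sum over source–sink paths of the products of labels; size is vertices plus edges. A $\mathrm{BABP}_p$ gate is labelled by an ABP over $\mathrm{GF}(p)$ and $T\subseteq\mathrm{GF}(p)$ and outputs 1 on Boolean inputs iff the polynomial value lies in $T$; its size is the ABP's size. $\mathsf{nuDet}_{p_1}\circ\cdots\circ\mathsf{nuDet}_{p_h}$ is the class of languages $L$ such that for each $n$, $L\cap\{0,1\}^n$ is recognized by a layered circuit whose top layer is a single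 $\mathrm{BABP}_{p_1}$ gate, whose layer $i$ consists of $\mathrm{BABP}_{p_i}$ gates fed by layer $i+1$, and whose bottom layer of $\mathrm{BABP}_{p_h}$ gates reads the input bits, of total size (edges plus gate sizes) polynomial in $n$. *)

theory Defs
  imports Main "HOL-Computational_Algebra.Primes"
begin

record 'a algebra =
  alg_carrier :: "'a set"
  alg_ops :: "(nat \<times> ('a list \<Rightarrow> 'a)) list"

definition finite_algebra :: "'a algebra \<Rightarrow> bool" where
  "finite_algebra A \<longleftrightarrow> finite (alg_carrier A) \<and> alg_carrier A \<noteq> {} \<and>
     (\<forall>(k, f) \<in> set (alg_ops A). \<forall>xs. length xs = k \<and> set xs \<subseteq> alg_carrier A
        \<longrightarrow> f xs \<in> alg_carrier A)"

datatype 'v trm = TVar 'v | TOp nat "'v trm list"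

fun wf_trm :: "'a algebra \<Rightarrow> 'v trm \<Rightarrow> bool" where
  "wf_trm A (TVar v) = True"
| "wf_trm A (TOp f ts) = (f < length (alg_ops A) \<and> length ts = fst (alg_ops A ! f)
      \<and> (\<forall>t \<in> set ts. wf_trm A t))"

fun trm_vars :: "'v trm \<Rightarrow> 'v set" where
  "trm_vars (TVar v) = {v}"
| "trm_vars (TOp f ts) = (\<Union>t \<in> set ts. trm_vars t)"

fun teval :: "'a algebra \<Rightarrow> ('v \<Rightarrow> 'a) \<Rightarrow> 'v trm \<Rightarrow> 'a" where
  "teval A e (TVar v) = e v"
| "teval A e (TOp f ts) = snd (alg_ops A ! f) (map (teval A e) ts)"

definition env3 :: "'a \<Rightarrow> 'a \<Rightarrow> 'a \<Rightarrow> nat \<Rightarrow> 'a" where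
  "env3 x y z i = (if i = 0 then x else if i = 1 then y else z)"

definition has_malcev :: "'a algebra \<Rightarrow> bool" where
  "has_malcev A \<longleftrightarrow> (\<exists>d :: nat trm. wf_trm A d \<and> trm_vars d \<subseteq> {0, 1, 2} \<and>
     (\<forall>x \<in> alg_carrier A. \<forall>y \<in> alg_carrier A.
        teval A (env3 x y y) d = x \<and> teval A (env3 y y x) d = x))"

definition is_cong :: "'a algebra \<Rightarrow> ('a \<times> 'a) set \<Rightarrow> bool" where
  "is_cong A \<theta> \<longleftrightarrow> equiv (alg_carrier A) \<theta> \<and>
     (\<forall>(k, f) \<in> set (alg_ops A). \<forall>xs ys. length xs = k \<and> length ys = k \<and>
        list_all2 (\<lambda>x y. (x, y) \<in> \<theta>) xs ys \<longrightarrow> (f xs, f ys) \<in> \<theta>)"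

text \<open>Variables \<open>Inl i\<close> are the x's, \<open>Inr j\<close> the y's.\<close>
definition centralizes :: "'a algebra \<Rightarrow> ('a \<times> 'a) set \<Rightarrow> ('a \<times> 'a) set \<Rightarrow> ('a \<times> 'a) set \<Rightarrow> bool" where
  "centralizes A \<alpha> \<beta> \<delta> \<longleftrightarrow>
     (\<forall>t :: (nat + nat) trm. wf_trm A t \<longrightarrow>
       (\<forall>a b c d. (\<forall>i. (a i, b i) \<in> \<alpha>) \<and> (\<forall>j. (c j, d j) \<in> \<beta>) \<longrightarrow>
          (teval A (case_sum a c) t, teval A (case_sum a d) t) \<in> \<delta> \<longrightarrow>
          (teval A (case_sum b c) t, teval A (case_sum b d) t) \<in> \<delta>))"

definition commutator :: "'a algebra \<Rightarrow> ('a \<times> 'a) set \<Rightarrow> ('a \<times> 'a) set \<Rightarrow> ('a \<times> 'a) set" where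
  "commutator A \<alpha> \<beta> = \<Inter> {\<delta>. is_cong A \<delta> \<and> centralizes A \<alpha> \<beta> \<delta>}"

fun derived :: "'a algebra \<Rightarrow> nat \<Rightarrow> ('a \<times> 'a) set" where
  "derived A 0 = alg_carrier A \<times> alg_carrier A"
| "derived A (Suc n) = commutator A (derived A n) (derived A n)"

definition solvable_alg :: "'a algebra \<Rightarrow> bool" where
  "solvable_alg A \<longleftrightarrow> (\<exists>n. derived A n = Id_on (alg_carrier A))"

text \<open>A circuit is a list of nodes in topological order; gate children are
  indices of earlier nodes (edges, with multiplicity and order); the output
  node is the last node. Inputs are numbered 0..n-1.\<close>
datatype 'a cnode = CIn nat | CConst 'a | CGate nat "nat list"

definition wf_circ :: "'a algebra \<Rightarrow> nat \<Rightarrow> 'a cnode list \<Rightarrow> bool" where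
  "wf_circ A n C \<longleftrightarrow> C \<noteq> [] \<and> (\<forall>i < length C. case C ! i of
      CIn j \<Rightarrow> j < n
    | CConst c \<Rightarrow> c \<in> alg_carrier A
    | CGate f cs \<Rightarrow> f < length (alg_ops A) \<and> length cs = fst (alg_ops A ! f)
                     \<and> (\<forall>j \<in> set cs. j < i))"

fun cnode_edges :: "'a cnode \<Rightarrow> nat" where
  "cnode_edges (CGate f cs) = length cs"
| "cnode_edges _ = 0"

definition circ_size :: "'a cnode list \<Rightarrow> nat" where
  "circ_size C = length C + sum_list (map cnode_edges C)"

fun cnode_val :: "'a algebra \<Rightarrow> (nat \<Rightarrow> 'a) \<Rightarrow> 'a list \<Rightarrow> 'a cnode \<Rightarrow> 'a" where
  "cnode_val A inp acc (CIn j) = inp j"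
| "cnode_val A inp acc (CConst c) = c"
| "cnode_val A inp acc (CGate f cs) = snd (alg_ops A ! f) (map (\<lambda>j. acc ! j) cs)"

fun cvals :: "'a algebra \<Rightarrow> (nat \<Rightarrow> 'a) \<Rightarrow> 'a list \<Rightarrow> 'a cnode list \<Rightarrow> 'a list" where
  "cvals A inp acc [] = acc"
| "cvals A inp acc (c # cs) = cvals A inp (acc @ [cnode_val A inp acc c]) cs"

definition circ_eval :: "'a algebra \<Rightarrow> (nat \<Rightarrow> 'a) \<Rightarrow> 'a cnode list \<Rightarrow> 'a" where
  "circ_eval A inp C = last (cvals A inp [] C)"

text \<open>nuP_A: languages accepted by polynomial-size NuDFAs over A
  (words of length n \<ge> 1; the empty word is not constrained).\<close>
definition nuP :: "'a algebra \<Rightarrow> bool list set set" where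
  "nuP A = {L. \<exists>(t :: nat \<Rightarrow> 'a cnode list) (\<iota> :: bool \<Rightarrow> 'a) S (c :: nat) (k :: nat).
      range \<iota> \<subseteq> alg_carrier A \<and> S \<subseteq> alg_carrier A \<and>
      (\<forall>n \<ge> 1. wf_circ A n (t n) \<and> circ_size (t n) \<le> c * n ^ k + c) \<and>
      (\<forall>b. length b \<ge> 1 \<longrightarrow>
         (b \<in> L \<longleftrightarrow> circ_eval A (\<lambda>i. \<iota> (b ! i)) (t (length b)) \<in> S))}"

text \<open>GF(p) is represented by the integers {0..<p}, arithmetic mod p.\<close>
datatype lab = LVar nat | LConst int

text \<open>An ABP: vertices 0..nv-1 (topologically numbered, so acyclic), source 0,
  sink nv-1, a list of labelled edges (u, v, label) (a multigraph).\<close>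
definition abp_wf :: "nat \<Rightarrow> nat \<Rightarrow> (nat \<times> nat \<times> lab) list \<Rightarrow> nat \<Rightarrow> bool" where
  "abp_wf p nv E nvars \<longleftrightarrow> nv \<ge> 1 \<and> (\<forall>(u, v, l) \<in> set E. u < v \<and> v < nv \<and>
     (case l of LVar j \<Rightarrow> j < nvars | LConst c \<Rightarrow> 0 \<le> c \<and> c < int p))"

fun is_path :: "(nat \<times> nat \<times> lab) list \<Rightarrow> nat \<Rightarrow> nat \<Rightarrow> nat list \<Rightarrow> bool" where
  "is_path E s t [] = (s = t)"
| "is_path E s t (i # is) = (i < length E \<and> fst (E ! i) = s \<and> is_path E (fst (snd (E ! i))) t is)"

fun lab_val :: "(nat \<Rightarrow> int) \<Rightarrow> lab \<Rightarrow> int" where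
  "lab_val x (LVar j) = x j"
| "lab_val x (LConst c) = c"

definition abp_val :: "nat \<Rightarrow> nat \<Rightarrow> (nat \<times> nat \<times> lab) list \<Rightarrow> (nat \<Rightarrow> int) \<Rightarrow> int" where
  "abp_val p nv E x = (\<Sum>ps \<in> {ps. length ps \<le> length E \<and> is_path E 0 (nv - 1) ps}.
      prod_list (map (\<lambda>i. lab_val x (snd (snd (E ! i)))) ps)) mod int p"

text \<open>A BABP_p gate: an ABP, an accepting set T, and its input wires
  (ABP variable j reads the wire \<open>wires ! j\<close> from the layer below / input).\<close>
record babp_gate =
  g_nv :: nat
  g_E :: "(nat \<times> nat \<times> lab) list"
  g_T :: "int set"
  g_wires :: "nat list"

definition gate_wf :: "nat \<Rightarrow> nat \<Rightarrow> babp_gate \<Rightarrow> bool" where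
  "gate_wf p m g \<longleftrightarrow> abp_wf p (g_nv g) (g_E g) (length (g_wires g)) \<and>
     g_T g \<subseteq> {0..<int p} \<and> (\<forall>w \<in> set (g_wires g). w < m)"

definition gate_size :: "babp_gate \<Rightarrow> nat" where
  "gate_size g = g_nv g + length (g_E g)"

definition gate_out :: "nat \<Rightarrow> babp_gate \<Rightarrow> bool list \<Rightarrow> bool" where
  "gate_out p g y \<longleftrightarrow>
     abp_val p (g_nv g) (g_E g) (\<lambda>j. if y ! (g_wires g ! j) then 1 else 0) \<in> g_T g"

text \<open>Layered circuit: list of layers, top (layer 1, prime p_1) first,
  bottom (layer h, prime p_h) last, reading the n input bits.\<close>
fun layers_wf :: "nat list \<Rightarrow> babp_gate list list \<Rightarrow> nat \<Rightarrow> bool" where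
  "layers_wf [] [] n = True"
| "layers_wf (p # ps) (L # Ls) n =
     ((\<forall>g \<in> set L. gate_wf p (if Ls = [] then n else length (hd Ls)) g) \<and> layers_wf ps Ls n)"
| "layers_wf _ _ n = False"

fun layers_eval :: "nat list \<Rightarrow> babp_gate list list \<Rightarrow> bool list \<Rightarrow> bool list" where
  "layers_eval (p # ps) (L # Ls) x =
     map (\<lambda>g. gate_out p g (if Ls = [] then x else layers_eval ps Ls x)) L"
| "layers_eval _ _ x = x"

definition layers_size :: "babp_gate list list \<Rightarrow> nat" where
  "layers_size Ls = (\<Sum>L \<leftarrow> Ls. \<Sum>g \<leftarrow> L. length (g_wires g) + gate_size g)"

definition nuDet :: "nat list \<Rightarrow> bool list set set" where
  "nuDet ps = {L. \<exists>(C :: nat \<Rightarrow> babp_gate list list) (c :: nat) (k :: nat).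
      \<forall>n. C n \<noteq> [] \<and> length (hd (C n)) = 1 \<and> layers_wf ps (C n) n \<and>
          layers_size (C n) \<le> c * n ^ k + c \<and>
          (\<forall>x. length x = n \<longrightarrow> (x \<in> L \<longleftrightarrow> hd (layers_eval ps (C n) x)))}"

end

theory Submission
  imports Defs "HOL-Library.Countable"
begin

(* Take M = 2 p\<^sub>1 \<cdots> p\<^sub>h and the algebra on (\<int>/M)\<^sup>L, L = 2h + 1, with the Malcev operation
   x - y + z and the "carry" operations x + \<phi>(y\<^sub>k) z\<^sub>k\<^sub>+\<^sub>1 e\<^sub>k\<^sub>+\<^sub>1, where \<phi> is the identity or the
   indicator of divisibility by some q. Level j of every operation is affine in level j once the
   levels below j are fixed, so the congruences "agree below level j" satisfy
   [\<theta>\<^sub>j, \<theta>\<^sub>j] \<le> \<theta>\<^sub>j\<^sub>+\<^sub>1 and the algebra is solvable.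

   A layered BABP circuit is simulated level by level: the i-th layer from the bottom reads bits
   at level 2i, computes each ABP value by the path-sum recursion
   P(u) = [u = sink] + \<Sum> l(e) P(v) over the edges e = (u, v) at level 2i + 1 (multiplication by a bit or a constant is a
   carry with \<phi> = id), and writes the gate output [P mod p \<in> T] = \<Sum>t\<in>T. [p | P - t] at level
   2i + 2 with the divisibility carries, which are well defined modulo M because p | M.
   A gate of size s costs O(s\<^sup>2) nodes. *)

section \<open>Straight-line circuits over an arbitrary algebra\<close>

lemma nth_eq_last: "length xs = Suc n \<Longrightarrow> xs ! n = last xs"
  by (metis diff_Suc_1 last_conv_nth list.size(3) nat.distinct(1))

lemma length_cvals [simp]: "length (cvals A inp acc C) = length acc + length C"
  by (induction C arbitrary: acc) auto

lemma cvals_append: "cvals A inp acc (C @ D) = cvals A inp (cvals A inp acc C) D"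
  by (induction C arbitrary: acc) auto

lemma nth_cvals_prefix: "i < length acc \<Longrightarrow> cvals A inp acc C ! i = acc ! i"
  by (induction C arbitrary: acc) (auto simp: nth_append)

lemma cvals_map_CIn: "cvals A inp acc (map CIn js) = acc @ map inp js"
  by (induction js arbitrary: acc) auto

lemma teval_in_carrier:
  assumes "finite_algebra A" and "range e \<subseteq> alg_carrier A"
  shows "wf_trm A t \<Longrightarrow> teval A e t \<in> alg_carrier A"
proof (induction t)
  case (TOp f ts)
  obtain k g where g: "alg_ops A ! f = (k, g)" by fastforce
  then have "(k, g) \<in> set (alg_ops A)" and "length (map (teval A e) ts) = k"
    and "set (map (teval A e) ts) \<subseteq> alg_carrier A"
    using TOp by (auto dest!: nth_mem)
  then show ?case
    using g assms(1) unfolding finite_algebra_def by auto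
qed (use assms(2) in auto)

definition node_wf :: "'a algebra \<Rightarrow> nat \<Rightarrow> nat \<Rightarrow> 'a cnode \<Rightarrow> bool" where
  "node_wf A n i nd \<longleftrightarrow> (case nd of
      CIn j \<Rightarrow> j < n
    | CConst c \<Rightarrow> c \<in> alg_carrier A
    | CGate f cs \<Rightarrow> f < length (alg_ops A) \<and> length cs = fst (alg_ops A ! f) \<and> (\<forall>j \<in> set cs. j < i))"

definition nodes_wf :: "'a algebra \<Rightarrow> nat \<Rightarrow> nat \<Rightarrow> 'a cnode list \<Rightarrow> bool" where
  "nodes_wf A n off C \<longleftrightarrow> (\<forall>i < length C. node_wf A n (off + i) (C ! i))"

lemma wf_circ_iff_nodes_wf: "wf_circ A n C \<longleftrightarrow> C \<noteq> [] \<and> nodes_wf A n 0 C"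
  unfolding wf_circ_def nodes_wf_def node_wf_def by (simp only: add_0)

lemma nodes_wf_Nil [simp]: "nodes_wf A n off []"
  by (simp add: nodes_wf_def)

lemma nodes_wf_append:
  "nodes_wf A n off (C @ D) \<longleftrightarrow> nodes_wf A n off C \<and> nodes_wf A n (off + length C) D"
proof -
  have "(\<forall>i < length C + length D. P i) \<longleftrightarrow> (\<forall>i < length C. P i) \<and> (\<forall>i < length D. P (length C + i))"
    for P by (auto, metis add_diff_inverse_nat nat_add_left_cancel_less)
  then show ?thesis
    unfolding nodes_wf_def by (simp add: nth_append add.assoc)
qed

lemma nodes_wf_Cons: "nodes_wf A n off (nd # C) \<longleftrightarrow> node_wf A n off nd \<and> nodes_wf A n (Suc off) C"
  using nodes_wf_append[of A n off "[nd]" C] by (simp add: nodes_wf_def)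

lemma nodes_wf_concat_map:
  assumes "\<And>r. r < R \<Longrightarrow> length (f r) = B \<and> nodes_wf A n (off + r * B) (f r)"
  shows "nodes_wf A n off (concat (map f [0..<R]))"
  using assms
proof (induction R)
  case (Suc R)
  have "length (concat (map f [0..<R])) = R * B"
    using Suc.prems by (induction R) auto
  then show ?case using Suc by (simp add: nodes_wf_append)
qed simp

lemma set_cvals_subset_carrier:
  assumes "finite_algebra A" and "range inp \<subseteq> alg_carrier A"
  shows "nodes_wf A n (length acc) C \<Longrightarrow> set acc \<subseteq> alg_carrier A \<Longrightarrow>
    set (cvals A inp acc C) \<subseteq> alg_carrier A"
proof (induction C arbitrary: acc)
  case (Cons nd C)
  have nd: "node_wf A n (length acc) nd" and C: "nodes_wf A n (Suc (length acc)) C"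
    using Cons.prems(1) by (auto simp: nodes_wf_Cons)
  have "cnode_val A inp acc nd \<in> alg_carrier A"
  proof (cases nd)
    case (CIn j) then show ?thesis using assms(2) by auto
  next
    case (CConst c) then show ?thesis using nd by (simp add: node_wf_def)
  next
    case (CGate f cs)
    obtain k g where g: "alg_ops A ! f = (k, g)" by fastforce
    then have "(k, g) \<in> set (alg_ops A)" and "length (map ((!) acc) cs) = k"
      and "set (map ((!) acc) cs) \<subseteq> alg_carrier A"
      using nd Cons.prems(2) CGate unfolding node_wf_def by (auto dest!: nth_mem)
    then show ?thesis
      using CGate g assms(1) unfolding finite_algebra_def by auto
  qed
  then show ?case using Cons.IH[of "acc @ [cnode_val A inp acc nd]"] C Cons.prems(2) by simp
qed simp

lemma sum_edges_le:
  assumes "\<forall>(k, f) \<in> set (alg_ops A). k \<le> r"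
  shows "nodes_wf A n off C \<Longrightarrow> sum_list (map cnode_edges C) \<le> r * length C"
proof (induction C arbitrary: off)
  case (Cons nd C)
  have "cnode_edges nd \<le> r"
  proof (cases nd)
    case (CGate f cs)
    obtain k g where g: "alg_ops A ! f = (k, g)" by fastforce
    then have "(k, g) \<in> set (alg_ops A)" and "length cs = k"
      using Cons.prems CGate unfolding nodes_wf_Cons node_wf_def by (auto dest!: nth_mem)
    then show ?thesis using CGate assms by auto
  qed auto
  moreover have "sum_list (map cnode_edges C) \<le> r * length C"
    using Cons.IH[of "Suc off"] Cons.prems by (simp add: nodes_wf_Cons)
  ultimately show ?case by simp
qed simp

section \<open>Path sums of acyclic branching programs\<close>

definition forward_edges :: "(nat \<times> nat \<times> lab) list \<Rightarrow> bool" where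
  "forward_edges E \<longleftrightarrow> (\<forall>e \<in> set E. fst e < fst (snd e))"

definition path_weight :: "(nat \<times> nat \<times> lab) list \<Rightarrow> (nat \<Rightarrow> int) \<Rightarrow> nat list \<Rightarrow> int" where
  "path_weight E x ps = prod_list (map (\<lambda>i. lab_val x (snd (snd (E ! i)))) ps)"

definition path_sum :: "(nat \<times> nat \<times> lab) list \<Rightarrow> nat \<Rightarrow> (nat \<Rightarrow> int) \<Rightarrow> nat \<Rightarrow> int" where
  "path_sum E t x u = (\<Sum>ps \<in> {ps. is_path E u t ps}. path_weight E x ps)"

lemma is_path_forward:
  assumes "forward_edges E"
  shows "is_path E s t ps \<Longrightarrow> distinct ps \<and> set ps \<subseteq> {..<length E} \<and> (\<forall>i \<in> set ps. s \<le> fst (E ! i))"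
proof (induction ps arbitrary: s)
  case (Cons i ps)
  then have i: "i < length E" "fst (E ! i) = s" and p: "is_path E (fst (snd (E ! i))) t ps"
    by auto
  have "fst (E ! i) < fst (snd (E ! i))"
    using assms i(1) unfolding forward_edges_def by auto
  then show ?case using Cons.IH[OF p] i by fastforce
qed simp

lemma length_path_le:
  assumes "forward_edges E" and "is_path E s t ps"
  shows "length ps \<le> length E"
proof -
  have "distinct ps" "set ps \<subseteq> {..<length E}"
    using is_path_forward[OF assms] by auto
  then show ?thesis by (metis card_lessThan card_mono distinct_card finite_lessThan)
qed

lemma finite_paths:
  assumes "forward_edges E"
  shows "finite {ps. is_path E s t ps}"
proof (rule finite_subset)
  show "{ps. is_path E s t ps} \<subseteq> {ps. set ps \<subseteq> {..<length E} \<and> length ps \<le> length E}"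
    using is_path_forward[OF assms] length_path_le[OF assms] by blast
qed (rule finite_lists_length_le; simp)

lemma paths_decomp:
  "{ps. is_path E u t ps} = (if u = t then {[]} else {}) \<union>
     (\<Union>i \<in> {i. i < length E \<and> fst (E ! i) = u}. Cons i ` {ps. is_path E (fst (snd (E ! i))) t ps})"
proof (rule set_eqI)
  show "ps \<in> {ps. is_path E u t ps} \<longleftrightarrow> ps \<in> (if u = t then {[]} else {}) \<union>
     (\<Union>i \<in> {i. i < length E \<and> fst (E ! i) = u}. Cons i ` {ps. is_path E (fst (snd (E ! i))) t ps})" for ps
    by (cases ps) auto
qed

definition edge_contrib :: "(nat \<times> nat \<times> lab) list \<Rightarrow> nat \<Rightarrow> (nat \<Rightarrow> int) \<Rightarrow> nat \<Rightarrow> nat \<Rightarrow> int" where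
  "edge_contrib E t x u i = (if fst (E ! i) = u
     then lab_val x (snd (snd (E ! i))) * path_sum E t x (fst (snd (E ! i))) else 0)"

lemma path_sum_rec:
  assumes "forward_edges E"
  shows "path_sum E t x u = of_bool (u = t) + (\<Sum>i < length E. edge_contrib E t x u i)"
proof -
  let ?I = "{i. i < length E \<and> fst (E ! i) = u}"
  let ?P = "\<lambda>i. {ps. is_path E (fst (snd (E ! i))) t ps}"
  have sum_Cons: "(\<Sum>ps \<in> Cons i ` ?P i. path_weight E x ps)
      = lab_val x (snd (snd (E ! i))) * path_sum E t x (fst (snd (E ! i)))" for i
    by (subst sum.reindex) (auto simp: path_weight_def path_sum_def sum_distrib_left)
  have "path_sum E t x u = of_bool (u = t) + (\<Sum>ps \<in> (\<Union>i \<in> ?I. Cons i ` ?P i). path_weight E x ps)"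
    unfolding path_sum_def
    by (subst paths_decomp, subst sum.union_disjoint)
      (auto simp: finite_paths[OF assms] path_weight_def)
  also have "(\<Sum>ps \<in> (\<Union>i \<in> ?I. Cons i ` ?P i). path_weight E x ps)
      = (\<Sum>i \<in> ?I. lab_val x (snd (snd (E ! i))) * path_sum E t x (fst (snd (E ! i))))"
    by (subst sum.UNION_disjoint) (auto simp: finite_paths[OF assms] sum_Cons)
  also have "\<dots> = (\<Sum>i < length E. edge_contrib E t x u i)"
    by (simp add: edge_contrib_def sum.If_cases lessThan_def Collect_conj_eq Int_commute)
  finally show ?thesis .
qed

lemma abp_val_eq_path_sum:
  assumes "abp_wf p nv E nvars"
  shows "abp_val p nv E x = path_sum E (nv - 1) x 0 mod int p"
proof -
  have "forward_edges E"
    using assms unfolding abp_wf_def forward_edges_def by auto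
  then have "{ps. length ps \<le> length E \<and> is_path E 0 (nv - 1) ps} = {ps. is_path E 0 (nv - 1) ps}"
    using length_path_le by blast
  then show ?thesis unfolding abp_val_def path_sum_def path_weight_def by simp
qed

section \<open>An algebra of vectors over \<open>\<int>/M\<close>\<close>

definition vec :: "nat \<Rightarrow> int list" where
  "vec = from_nat"

definition coord :: "nat \<Rightarrow> nat \<Rightarrow> int" where
  "coord x j = vec x ! j"

definition vec_carrier :: "nat \<Rightarrow> nat \<Rightarrow> nat set" where
  "vec_carrier L M = to_nat ` {xs. length xs = L \<and> set xs \<subseteq> {0..<int M}}"

definition code_op :: "(int list list \<Rightarrow> int list) \<Rightarrow> nat \<times> (nat list \<Rightarrow> nat)" where
  "code_op F = (3, \<lambda>xs. to_nat (F (map vec xs)))"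

definition vec_malcev :: "nat \<Rightarrow> nat \<Rightarrow> int list list \<Rightarrow> int list" where
  "vec_malcev L M xss = map (\<lambda>j. (xss!0!j - xss!1!j + xss!2!j) mod int M) [0..<L]"

definition vec_carry :: "nat \<Rightarrow> nat \<Rightarrow> nat \<Rightarrow> (int \<Rightarrow> int) \<Rightarrow> int list list \<Rightarrow> int list" where
  "vec_carry L M k \<phi> xss =
     map (\<lambda>j. (xss!0!j + (if j = Suc k then \<phi> (xss!1!k) * xss!2!j else 0)) mod int M) [0..<L]"

definition carry_coeff :: "nat \<Rightarrow> int \<Rightarrow> int" where
  "carry_coeff c = (if c = 0 then (\<lambda>x. x) else (\<lambda>x. if x mod int (c - 1) = 0 then 1 else 0))"

definition vec_ops :: "nat \<Rightarrow> nat \<Rightarrow> (nat \<times> (nat list \<Rightarrow> nat)) list" where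
  "vec_ops L M = code_op (vec_malcev L M) #
     map (\<lambda>i. code_op (vec_carry L M (i div (M + 2)) (carry_coeff (i mod (M + 2))))) [0..<L * (M + 2)]"

definition vec_alg :: "nat \<Rightarrow> nat \<Rightarrow> nat algebra" where
  "vec_alg L M = \<lparr>alg_carrier = vec_carrier L M, alg_ops = vec_ops L M\<rparr>"

definition carry_gate :: "nat \<Rightarrow> nat \<Rightarrow> nat \<Rightarrow> nat" where
  "carry_gate M k c = Suc (k * (M + 2) + c)"

lemma vec_to_nat [simp]: "vec (to_nat xs) = xs"
  by (simp add: vec_def)

lemma coord_to_nat [simp]: "coord (to_nat xs) j = xs ! j"
  by (simp add: coord_def)

lemma vec_carrier_iff:
  "x \<in> vec_carrier L M \<longleftrightarrow> to_nat (vec x) = x \<and> length (vec x) = L \<and> set (vec x) \<subseteq> {0..<int M}"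
  unfolding vec_carrier_def by force

lemma to_nat_in_vec_carrier: "length xs = L \<Longrightarrow> set xs \<subseteq> {0..<int M} \<Longrightarrow> to_nat xs \<in> vec_carrier L M"
  unfolding vec_carrier_def by blast

lemma coord_bounds: "x \<in> vec_carrier L M \<Longrightarrow> j < L \<Longrightarrow> 0 \<le> coord x j \<and> coord x j < int M"
  unfolding vec_carrier_iff coord_def by (auto dest!: nth_mem)

lemma vec_carrier_eqI:
  assumes "x \<in> vec_carrier L M" "y \<in> vec_carrier L M" "\<forall>j < L. coord x j = coord y j"
  shows "x = y"
  using assms unfolding vec_carrier_iff coord_def by (metis nth_equalityI)

lemma map_mod_in_vec_carrier: "0 < M \<Longrightarrow> to_nat (map (\<lambda>j. f j mod int M) [0..<L]) \<in> vec_carrier L M"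
  by (rule to_nat_in_vec_carrier) auto

lemma vec_ops_cases:
  "op \<in> set (vec_ops L M) \<Longrightarrow> op = code_op (vec_malcev L M) \<or> (\<exists>k \<phi>. op = code_op (vec_carry L M k \<phi>))"
  unfolding vec_ops_def by auto

lemma vec_ops_arity: "(k, f) \<in> set (vec_ops L M) \<Longrightarrow> k = 3"
  using vec_ops_cases by (fastforce simp: code_op_def)

lemma vec_ops_closed: "0 < M \<Longrightarrow> (k, f) \<in> set (vec_ops L M) \<Longrightarrow> f xs \<in> vec_carrier L M"
  using vec_ops_cases[of "(k, f)" L M]
  by (auto simp: code_op_def vec_malcev_def vec_carry_def map_mod_in_vec_carrier)

lemma vec_ops_carry_gate:
  assumes "k < L" "c < M + 2"
  shows "carry_gate M k c < length (vec_ops L M)"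
    and "vec_ops L M ! carry_gate M k c = code_op (vec_carry L M k (carry_coeff c))"
proof -
  define N where "N = M + 2"
  have "k * N + c < Suc k * N"
    using assms(2) by (simp add: N_def)
  also have "\<dots> \<le> L * N"
    using assms(1) by (intro mult_le_mono1) simp
  finally have "k * N + c < L * N" .
  moreover have "c < N"
    using assms(2) by (simp add: N_def)
  then have "(k * N + c) div N = k" "(k * N + c) mod N = c"
    by simp_all
  ultimately show "carry_gate M k c < length (vec_ops L M)"
    and "vec_ops L M ! carry_gate M k c = code_op (vec_carry L M k (carry_coeff c))"
    unfolding carry_gate_def vec_ops_def N_def[symmetric] by simp_all
qed

lemma finite_vec_alg: "0 < M \<Longrightarrow> finite_algebra (vec_alg L M)"
proof -
  assume M: "0 < M"
  have "finite (vec_carrier L M)"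
    unfolding vec_carrier_def
    by (intro finite_imageI finite_subset[OF _ finite_lists_length_eq[of "{0..<int M}" L]]) auto
  moreover have "to_nat (replicate L (0::int)) \<in> vec_carrier L M"
    using M by (intro to_nat_in_vec_carrier) auto
  ultimately show ?thesis
    unfolding finite_algebra_def vec_alg_def using vec_ops_closed[OF M] by auto
qed

lemma has_malcev_vec_alg: "has_malcev (vec_alg L M)"
proof -
  let ?d = "TOp 0 [TVar 0, TVar 1, TVar 2] :: nat trm"
  have eval: "teval (vec_alg L M) e ?d = to_nat (vec_malcev L M [vec (e 0), vec (e 1), vec (e 2)])" for e
    by (simp add: vec_alg_def vec_ops_def code_op_def)
  have "to_nat (vec_malcev L M [vec x, vec y, vec y]) = x" "to_nat (vec_malcev L M [vec y, vec y, vec x]) = x"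
    if "x \<in> vec_carrier L M" for x y
  proof -
    have "vec x ! j mod int M = vec x ! j" if "j < L" for j
      using coord_bounds[OF \<open>x \<in> vec_carrier L M\<close> that] by (simp add: coord_def)
    then have "vec_malcev L M [vec x, vec y, vec y] = vec x" "vec_malcev L M [vec y, vec y, vec x] = vec x"
      using \<open>x \<in> vec_carrier L M\<close> unfolding vec_carrier_iff vec_malcev_def
      by (auto intro: nth_equalityI)
    then show "to_nat (vec_malcev L M [vec x, vec y, vec y]) = x" "to_nat (vec_malcev L M [vec y, vec y, vec x]) = x"
      using \<open>x \<in> vec_carrier L M\<close> unfolding vec_carrier_iff by simp_all
  qed
  then show ?thesis
    unfolding has_malcev_def
    by (intro exI[of _ ?d]) (simp add: eval env3_def vec_alg_def vec_ops_def code_op_def)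
qed

section \<open>Solvability\<close>

lemma length_3_conv: "length xs = 3 \<longleftrightarrow> (\<exists>a b c. xs = [a, b, c])"
  by (auto simp: length_Suc_conv numeral_3_eq_3)

definition agree_below :: "nat \<Rightarrow> nat \<Rightarrow> nat \<Rightarrow> (nat \<times> nat) set" where
  "agree_below L M j =
     {(x, y). x \<in> vec_carrier L M \<and> y \<in> vec_carrier L M \<and> (\<forall>i < j. coord x i = coord y i)}"

lemma is_cong_agree_below:
  assumes "0 < M" and "j \<le> L"
  shows "is_cong (vec_alg L M) (agree_below L M j)"
proof -
  have "(f [x1, x2, x3], f [y1, y2, y3]) \<in> agree_below L M j"
    if op: "(k, f) \<in> set (vec_ops L M)" and "(x1, y1) \<in> agree_below L M j"
      "(x2, y2) \<in> agree_below L M j" "(x3, y3) \<in> agree_below L M j" for k f x1 x2 x3 y1 y2 y3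
  proof -
    have "\<forall>i < j. coord (f [x1, x2, x3]) i = coord (f [y1, y2, y3]) i"
      using vec_ops_cases[OF op] that(2-4) assms(2)
      by (auto simp: agree_below_def code_op_def vec_malcev_def vec_carry_def coord_def)
    then show ?thesis
      using vec_ops_closed[OF assms(1) op] unfolding agree_below_def by auto
  qed
  moreover have "equiv (vec_carrier L M) (agree_below L M j)"
    unfolding equiv_def refl_on_def sym_def trans_def agree_below_def by auto
  ultimately show ?thesis
    unfolding is_cong_def vec_alg_def using vec_ops_arity by (fastforce simp: length_3_conv)
qed

definition affine_quad :: "nat \<Rightarrow> nat \<Rightarrow> int list \<Rightarrow> int list \<Rightarrow> int list \<Rightarrow> int list \<Rightarrow> bool" where
  "affine_quad M j a b c d \<longleftrightarrow>
     (\<forall>i < j. b ! i = a ! i \<and> c ! i = a ! i \<and> d ! i = a ! i) \<and> int M dvd (a ! j - b ! j - c ! j + d ! j)"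

lemma dvd_alternating_mod:
  fixes m a b c d :: int
  assumes "m dvd a - b - c + d"
  shows "m dvd a mod m - b mod m - c mod m + d mod m"
proof -
  have "a mod m - b mod m - c mod m + d mod m = (a - b - c + d) - m * (a div m - b div m - c div m + d div m)"
    by (simp add: minus_div_mult_eq_mod[symmetric] algebra_simps)
  then show ?thesis using assms by simp
qed

lemma affine_quad_vec_malcev:
  assumes "j < L" "affine_quad M j x1 x2 x3 x4" "affine_quad M j y1 y2 y3 y4" "affine_quad M j z1 z2 z3 z4"
  shows "affine_quad M j (vec_malcev L M [x1, y1, z1]) (vec_malcev L M [x2, y2, z2])
    (vec_malcev L M [x3, y3, z3]) (vec_malcev L M [x4, y4, z4])"
proof -
  have "(x1!j - y1!j + z1!j) - (x2!j - y2!j + z2!j) - (x3!j - y3!j + z3!j) + (x4!j - y4!j + z4!j)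
      = (x1!j - x2!j - x3!j + x4!j) - (y1!j - y2!j - y3!j + y4!j) + (z1!j - z2!j - z3!j + z4!j)"
    by simp
  then have "int M dvd (x1!j - y1!j + z1!j) - (x2!j - y2!j + z2!j) - (x3!j - y3!j + z3!j) + (x4!j - y4!j + z4!j)"
    using assms(2-4) unfolding affine_quad_def by (metis dvd_add dvd_diff)
  then show ?thesis
    using assms unfolding affine_quad_def vec_malcev_def by (simp add: dvd_alternating_mod)
qed

lemma affine_quad_vec_carry:
  assumes "j < L" "affine_quad M j x1 x2 x3 x4" "affine_quad M j y1 y2 y3 y4" "affine_quad M j z1 z2 z3 z4"
  shows "affine_quad M j (vec_carry L M k \<phi> [x1, y1, z1]) (vec_carry L M k \<phi> [x2, y2, z2])
    (vec_carry L M k \<phi> [x3, y3, z3]) (vec_carry L M k \<phi> [x4, y4, z4])"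
proof -
  let ?G = "\<lambda>x y z. x!j + (if j = Suc k then \<phi> (y!k) * z!j else 0)"
  have "int M dvd ?G x1 y1 z1 - ?G x2 y2 z2 - ?G x3 y3 z3 + ?G x4 y4 z4"
  proof (cases "j = Suc k")
    case True
    then have "y2!k = y1!k" "y3!k = y1!k" "y4!k = y1!k"
      using assms(3) unfolding affine_quad_def by auto
    then have "?G x1 y1 z1 - ?G x2 y2 z2 - ?G x3 y3 z3 + ?G x4 y4 z4
       = (x1!j - x2!j - x3!j + x4!j) + \<phi> (y1!k) * (z1!j - z2!j - z3!j + z4!j)"
      using True by (simp add: algebra_simps)
    then show ?thesis
      using assms unfolding affine_quad_def by (metis dvd_add dvd_mult)
  next
    case False
    then show ?thesis using assms unfolding affine_quad_def by simp
  qed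
  then show ?thesis
    using assms unfolding affine_quad_def vec_carry_def by (auto simp: dvd_alternating_mod)
qed

lemma affine_quad_teval:
  assumes "j < L" and "\<forall>v. affine_quad M j (vec (e1 v)) (vec (e2 v)) (vec (e3 v)) (vec (e4 v))"
  shows "wf_trm (vec_alg L M) t \<Longrightarrow> affine_quad M j
    (vec (teval (vec_alg L M) e1 t)) (vec (teval (vec_alg L M) e2 t))
    (vec (teval (vec_alg L M) e3 t)) (vec (teval (vec_alg L M) e4 t))"
proof (induction t)
  case (TVar v)
  then show ?case using assms(2) by simp
next
  case (TOp f ts)
  let ?quad = "\<lambda>t. affine_quad M j (vec (teval (vec_alg L M) e1 t)) (vec (teval (vec_alg L M) e2 t))
    (vec (teval (vec_alg L M) e3 t)) (vec (teval (vec_alg L M) e4 t))"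
  have op: "vec_ops L M ! f \<in> set (vec_ops L M)" and ar: "length ts = fst (vec_ops L M ! f)"
    using TOp.prems by (auto simp: vec_alg_def)
  obtain t1 t2 t3 where ts: "ts = [t1, t2, t3]"
    using ar vec_ops_arity[of "fst (vec_ops L M ! f)" "snd (vec_ops L M ! f)"] op
    by (auto simp: length_3_conv)
  have "?quad t1" "?quad t2" "?quad t3"
    using TOp ts by auto
  then show ?case
    using vec_ops_cases[OF op] ts
      affine_quad_vec_malcev[OF assms(1)] affine_quad_vec_carry[OF assms(1)]
    by (auto simp: vec_alg_def code_op_def)
qed

lemma centralizes_agree_below:
  assumes "0 < M" and "j < L"
  shows "centralizes (vec_alg L M) (agree_below L M j) (agree_below L M j) (agree_below L M (Suc j))"
  unfolding centralizes_def
proof (intro allI impI)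
  fix t :: "(nat + nat) trm" and a b c d :: "nat \<Rightarrow> nat"
  assume wf: "wf_trm (vec_alg L M) t"
    and rel: "(\<forall>i. (a i, b i) \<in> agree_below L M j) \<and> (\<forall>i. (c i, d i) \<in> agree_below L M j)"
    and ac_ad: "(teval (vec_alg L M) (case_sum a c) t, teval (vec_alg L M) (case_sum a d) t) \<in> agree_below L M (Suc j)"
  let ?T = "\<lambda>e. teval (vec_alg L M) e t"
  have "affine_quad M j (vec (case_sum a c v)) (vec (case_sum a d v)) (vec (case_sum b c v)) (vec (case_sum b d v))"
    for v using rel by (cases v) (auto simp: affine_quad_def agree_below_def coord_def)
  then have quad: "affine_quad M j (vec (?T (case_sum a c))) (vec (?T (case_sum a d)))
      (vec (?T (case_sum b c))) (vec (?T (case_sum b d)))"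
    using affine_quad_teval[OF assms(2) _ wf] by blast
  have carrier: "?T (case_sum b c) \<in> vec_carrier L M" "?T (case_sum b d) \<in> vec_carrier L M"
  proof -
    have "range (case_sum b c) \<subseteq> vec_carrier L M" "range (case_sum b d) \<subseteq> vec_carrier L M"
      using rel by (auto simp: agree_below_def split: sum.split)
    then show "?T (case_sum b c) \<in> vec_carrier L M" "?T (case_sum b d) \<in> vec_carrier L M"
      using teval_in_carrier[OF finite_vec_alg[OF assms(1)] _ wf] by (simp_all add: vec_alg_def)
  qed
  have "int M dvd coord (?T (case_sum b d)) j - coord (?T (case_sum b c)) j"
    using quad ac_ad unfolding affine_quad_def agree_below_def coord_def by auto
  then have "coord (?T (case_sum b c)) j = coord (?T (case_sum b d)) j"
    using coord_bounds[OF carrier(1) assms(2)] coord_bounds[OF carrier(2) assms(2)]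
    by (metis mod_eq_dvd_iff mod_pos_pos_trivial)
  moreover have "\<forall>i < j. coord (?T (case_sum b c)) i = coord (?T (case_sum b d)) i"
    using quad unfolding affine_quad_def coord_def by simp
  ultimately show "(?T (case_sum b c), ?T (case_sum b d)) \<in> agree_below L M (Suc j)"
    using carrier unfolding agree_below_def by (auto simp: less_Suc_eq)
qed

lemma Id_on_subset_derived: "Id_on (alg_carrier A) \<subseteq> derived A i"
proof (induction i)
  case (Suc i)
  show ?case
    unfolding derived.simps commutator_def
    by (rule Inter_greatest) (auto simp: is_cong_def equiv_def refl_on_def)
qed auto

lemma derived_subset_agree_below: "0 < M \<Longrightarrow> i \<le> L \<Longrightarrow> derived (vec_alg L M) i \<subseteq> agree_below L M i"
proof (induction i)
  case 0
  then show ?case by (auto simp: agree_below_def vec_alg_def)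
next
  case (Suc i)
  have "centralizes (vec_alg L M) (derived (vec_alg L M) i) (derived (vec_alg L M) i) (agree_below L M (Suc i))"
    using centralizes_agree_below[of M i L] Suc unfolding centralizes_def by (meson Suc_leD Suc_le_lessD subsetD)
  then show ?case
    using is_cong_agree_below[OF Suc.prems] by (auto simp: commutator_def)
qed

lemma solvable_vec_alg: "0 < M \<Longrightarrow> solvable_alg (vec_alg L M)"
proof -
  assume "0 < M"
  have "agree_below L M L \<subseteq> Id_on (vec_carrier L M)"
    unfolding agree_below_def using vec_carrier_eqI by auto
  then have "derived (vec_alg L M) L = Id_on (alg_carrier (vec_alg L M))"
    using derived_subset_agree_below[OF \<open>0 < M\<close>, of L L] Id_on_subset_derived[of "vec_alg L M" L]
    by (auto simp: vec_alg_def)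
  then show ?thesis unfolding solvable_alg_def by blast
qed

section \<open>Simulating one BABP gate\<close>

definition unit_vec :: "nat \<Rightarrow> nat \<Rightarrow> int \<Rightarrow> nat" where
  "unit_vec L k c = to_nat ((replicate L 0)[k := c])"

lemma coord_unit_vec: "i < L \<Longrightarrow> coord (unit_vec L k c) i = (if i = k then c else 0)"
  by (simp add: unit_vec_def nth_list_update)

lemma unit_vec_in_vec_carrier: "0 \<le> c \<Longrightarrow> c < int M \<Longrightarrow> unit_vec L k c \<in> vec_carrier L M"
  unfolding unit_vec_def
  by (rule to_nat_in_vec_carrier) (auto dest!: subsetD[OF set_update_subset_insert])

lemma coord_carry_node:
  assumes "k < L" "c < M + 2" "i < L"
  shows "coord (cnode_val (vec_alg L M) inp V (CGate (carry_gate M k c) [x, y, z])) i =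
    (coord (V ! x) i + (if i = Suc k then carry_coeff c (coord (V ! y) k) * coord (V ! z) i else 0)) mod int M"
  using vec_ops_carry_gate[OF assms(1,2)] assms(3)
  by (simp add: vec_alg_def code_op_def vec_carry_def coord_def)

lemma coord_malcev_node:
  "i < L \<Longrightarrow> coord (cnode_val (vec_alg L M) inp V (CGate 0 [x, y, z])) i =
    (coord (V ! x) i - coord (V ! y) i + coord (V ! z) i) mod int M"
  by (simp add: vec_alg_def vec_ops_def code_op_def vec_malcev_def coord_def)

text \<open>The gadget of a gate whose wires carry bits at level \<open>b\<close> starts with the zero vector at
  node \<open>off\<close>, followed by one block per vertex, from the sink backwards, with a pair of nodes
  for every edge; edges not leaving the vertex of the block are multiplied by node \<open>off\<close>.
  The path sum of vertex \<open>v\<close> ends up at level \<open>b + 1\<close> of node \<open>vertex_node off g v\<close>,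
  the output bit at level \<open>b + 2\<close> of the last node.\<close>

definition block_len :: "babp_gate \<Rightarrow> nat" where
  "block_len g = 1 + 2 * length (g_E g)"

definition vertex_node :: "nat \<Rightarrow> babp_gate \<Rightarrow> nat \<Rightarrow> nat" where
  "vertex_node off g v = off + (g_nv g - v) * block_len g"

definition edge_nodes :: "nat \<Rightarrow> nat \<Rightarrow> nat \<Rightarrow> nat list \<Rightarrow> babp_gate \<Rightarrow> nat \<Rightarrow> nat \<Rightarrow> nat \<Rightarrow> nat cnode list" where
  "edge_nodes L M b outs g off r i =
     (let acc = off + 1 + r * block_len g + 2 * i; (u, v, l) = g_E g ! i in
      [CConst (unit_vec L b (case l of LConst c \<Rightarrow> c | LVar _ \<Rightarrow> 0)),
       CGate (carry_gate M b 0)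
         [acc, case l of LVar j \<Rightarrow> outs ! (g_wires g ! j) | LConst _ \<Rightarrow> Suc acc,
          if u = g_nv g - 1 - r then vertex_node off g v else off]])"

definition vertex_block :: "nat \<Rightarrow> nat \<Rightarrow> nat \<Rightarrow> nat list \<Rightarrow> babp_gate \<Rightarrow> nat \<Rightarrow> nat \<Rightarrow> nat \<Rightarrow> nat cnode list" where
  "vertex_block L M b outs g off r i =
     CConst (unit_vec L (Suc b) (of_bool (r = 0))) # concat (map (edge_nodes L M b outs g off r) [0..<i])"

definition wire_vals :: "babp_gate \<Rightarrow> bool list \<Rightarrow> nat \<Rightarrow> int" where
  "wire_vals g bits j = of_bool (bits ! (g_wires g ! j))"

definition holds_bits :: "nat list \<Rightarrow> nat \<Rightarrow> nat list \<Rightarrow> bool list \<Rightarrow> bool" where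
  "holds_bits V b outs bits \<longleftrightarrow> length outs = length bits \<and>
     (\<forall>w < length bits. outs ! w < length V \<and> coord (V ! (outs ! w)) b = of_bool (bits ! w))"

lemma holds_bits_cvals: "holds_bits V b outs bits \<Longrightarrow> holds_bits (cvals A inp V C) b outs bits"
  unfolding holds_bits_def by (simp add: nth_cvals_prefix trans_less_add1)

lemma length_edge_nodes [simp]: "length (edge_nodes L M b outs g off r i) = 2"
  by (simp add: edge_nodes_def Let_def split: prod.split)

lemma length_vertex_block: "length (vertex_block L M b outs g off r i) = 1 + 2 * i"
proof -
  have "length (concat (map (edge_nodes L M b outs g off r) [0..<i])) = 2 * i"
    by (induction i) auto
  then show ?thesis by (simp add: vertex_block_def)
qed

lemma vertex_block_Suc:
  "vertex_block L M b outs g off r (Suc i) = vertex_block L M b outs g off r i @ edge_nodes L M b outs g off r i"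
  by (simp add: vertex_block_def)

lemma edge_facts:
  assumes "gate_wf p nb g" "i < length (g_E g)" "g_E g ! i = (u, v, l)"
  shows "u < v" "v < g_nv g" "\<And>j. l = LVar j \<Longrightarrow> g_wires g ! j < nb"
    "\<And>c. l = LConst c \<Longrightarrow> 0 \<le> c \<and> c < int p"
  using assms nth_mem[OF assms(2)] unfolding gate_wf_def abp_wf_def by fastforce+

definition gate_path_sum :: "babp_gate \<Rightarrow> bool list \<Rightarrow> nat \<Rightarrow> int" where
  "gate_path_sum g bits = path_sum (g_E g) (g_nv g - 1) (wire_vals g bits)"

lemma vertex_node_less:
  assumes "g_nv g - 1 - r < v" "v < g_nv g"
  shows "vertex_node off g v < off + 1 + r * block_len g"
proof -
  have "(g_nv g - v) * block_len g \<le> r * block_len g"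
    using assms by (intro mult_le_mono1) linarith
  then show ?thesis unfolding vertex_node_def by linarith
qed

lemma coord_last_edge_nodes:
  assumes L: "Suc b < L"
    and len: "length V = off + 2 + r * block_len g + 2 * i"
    and e: "g_E g ! i = (u, v, l)"
    and src: "\<And>j. l = LVar j \<Longrightarrow> outs ! (g_wires g ! j) < length V"
    and tgt: "(if u = g_nv g - 1 - r then vertex_node off g v else off) < length V"
  shows "coord (last (cvals (vec_alg L M) inp V (edge_nodes L M b outs g off r i))) (Suc b) =
    (coord (last V) (Suc b) + (case l of LVar j \<Rightarrow> coord (V ! (outs ! (g_wires g ! j))) b | LConst c \<Rightarrow> c)
       * coord (V ! (if u = g_nv g - 1 - r then vertex_node off g v else off)) (Suc b)) mod int M"
proof -
  let ?acc = "off + 1 + r * block_len g + 2 * i"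
  let ?c = "case l of LConst c \<Rightarrow> c | LVar _ \<Rightarrow> 0"
  let ?src = "case l of LVar j \<Rightarrow> outs ! (g_wires g ! j) | LConst _ \<Rightarrow> Suc ?acc"
  let ?tgt = "if u = g_nv g - 1 - r then vertex_node off g v else off"
  let ?V = "V @ [unit_vec L b ?c]"
  have nodes: "edge_nodes L M b outs g off r i =
      [CConst (unit_vec L b ?c), CGate (carry_gate M b 0) [?acc, ?src, ?tgt]]"
    unfolding edge_nodes_def Let_def e by (simp only: prod.case)
  have "?V ! ?acc = last V"
    using len by (cases V rule: rev_cases) (auto simp: nth_append)
  moreover have "coord (?V ! ?src) b = (case l of LVar j \<Rightarrow> coord (V ! (outs ! (g_wires g ! j))) b | LConst c \<Rightarrow> c)"
    using src len L by (cases l) (auto simp: nth_append coord_unit_vec)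
  moreover have "?V ! ?tgt = V ! ?tgt"
    using tgt by (simp add: nth_append)
  moreover have "last (cvals (vec_alg L M) inp V (edge_nodes L M b outs g off r i)) =
      cnode_val (vec_alg L M) inp ?V (CGate (carry_gate M b 0) [?acc, ?src, ?tgt])"
    by (simp add: nodes del: cnode_val.simps(3))
  moreover have "b < L" "0 < M + 2" using L by simp_all
  ultimately show ?thesis
    using L by (simp add: coord_carry_node carry_coeff_def del: cnode_val.simps)
qed

lemma mod_add_mult_mod: "((x::int) + y * (z mod m)) mod m = (x + y * z) mod m"
  by (metis mod_add_right_eq mod_mult_right_eq)

lemma coord_last_vertex_block:
  assumes M: "2 \<le> M" and L: "Suc b < L" and wf: "gate_wf p (length bits) g"
    and bits: "holds_bits V b outs bits" and len: "length V = off + 1 + r * block_len g"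
    and r: "r < g_nv g" and zero: "coord (V ! off) (Suc b) = 0"
    and later: "\<forall>v. g_nv g - 1 - r < v \<and> v < g_nv g \<longrightarrow>
      coord (V ! vertex_node off g v) (Suc b) = gate_path_sum g bits v mod int M"
  shows "i \<le> length (g_E g) \<Longrightarrow>
    coord (last (cvals (vec_alg L M) inp V (vertex_block L M b outs g off r i))) (Suc b) =
    (of_bool (r = 0) + (\<Sum>i' < i. edge_contrib (g_E g) (g_nv g - 1) (wire_vals g bits) (g_nv g - 1 - r) i'))
      mod int M"
proof (induction i)
  case 0
  show ?case using M L by (simp add: vertex_block_def coord_unit_vec)
next
  case (Suc i)
  let ?W = "cvals (vec_alg L M) inp V (vertex_block L M b outs g off r i)"
  let ?u = "g_nv g - 1 - r"
  obtain u v l where e: "g_E g ! i = (u, v, l)" by (metis prod_cases3)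
  have i: "i < length (g_E g)" using Suc.prems by simp
  note edge = edge_facts[OF wf i e]
  have old: "?W ! j = V ! j" if "j < length V" for j
    using that by (rule nth_cvals_prefix)
  have lenW: "length ?W = off + 2 + r * block_len g + 2 * i"
    using len by (simp add: length_vertex_block)
  have src: "outs ! (g_wires g ! j) < length ?W" if "l = LVar j" for j
    using bits edge(3)[OF that] lenW len unfolding holds_bits_def by auto
  have tgt: "(if u = ?u then vertex_node off g v else off) < length V"
    using vertex_node_less[of g r v off] edge(1,2) len by auto
  have "coord (?W ! (if u = ?u then vertex_node off g v else off)) (Suc b)
      = (if u = ?u then gate_path_sum g bits v mod int M else 0)"
    using old[OF tgt] later edge(1,2) zero by auto
  moreover have "(case l of LVar j \<Rightarrow> coord (?W ! (outs ! (g_wires g ! j))) b | LConst c \<Rightarrow> c)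
      = lab_val (wire_vals g bits) l"
    using bits edge(3) old unfolding holds_bits_def wire_vals_def by (cases l) auto
  ultimately have "coord (last (cvals (vec_alg L M) inp ?W (edge_nodes L M b outs g off r i))) (Suc b)
      = (coord (last ?W) (Suc b) + edge_contrib (g_E g) (g_nv g - 1) (wire_vals g bits) ?u i) mod int M"
    using coord_last_edge_nodes[OF L lenW e src, where inp = inp and M = M] tgt lenW
    by (simp add: edge_contrib_def e gate_path_sum_def mod_add_mult_mod split: if_splits)
  then show ?case
    using Suc i by (simp add: vertex_block_Suc cvals_append mod_add_left_eq add.assoc)
qed

lemma coord_last_vertex_block_eq_path_sum:
  assumes M: "2 \<le> M" and L: "Suc b < L" and wf: "gate_wf p (length bits) g"
    and bits: "holds_bits V b outs bits" and len: "length V = off + 1 + r * block_len g"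
    and r: "r < g_nv g" and zero: "coord (V ! off) (Suc b) = 0"
    and later: "\<forall>v. g_nv g - 1 - r < v \<and> v < g_nv g \<longrightarrow>
      coord (V ! vertex_node off g v) (Suc b) = gate_path_sum g bits v mod int M"
  shows "coord (last (cvals (vec_alg L M) inp V (vertex_block L M b outs g off r (length (g_E g))))) (Suc b)
    = gate_path_sum g bits (g_nv g - 1 - r) mod int M"
proof -
  have "forward_edges (g_E g)"
    using wf unfolding gate_wf_def abp_wf_def forward_edges_def by auto
  moreover have "(g_nv g - 1 - r = g_nv g - 1) = (r = 0)"
    using r by auto
  ultimately show ?thesis
    using coord_last_vertex_block[OF assms, of "length (g_E g)"]
    by (simp add: gate_path_sum_def path_sum_rec)
qed

definition vertex_blocks :: "nat \<Rightarrow> nat \<Rightarrow> nat \<Rightarrow> nat list \<Rightarrow> babp_gate \<Rightarrow> nat \<Rightarrow> nat \<Rightarrow> nat cnode list" where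
  "vertex_blocks L M b outs g off R =
     concat (map (\<lambda>r. vertex_block L M b outs g off r (length (g_E g))) [0..<R])"

lemma length_vertex_blocks: "length (vertex_blocks L M b outs g off R) = R * block_len g"
  by (induction R) (auto simp: vertex_blocks_def length_vertex_block block_len_def)

lemma vertex_blocks_correct:
  assumes M: "2 \<le> M" and L: "Suc b < L" and wf: "gate_wf p (length bits) g"
    and bits: "holds_bits V b outs bits" and len: "length V = Suc off" and zero: "coord (V ! off) (Suc b) = 0"
  shows "R \<le> g_nv g \<Longrightarrow> \<forall>v. g_nv g - R \<le> v \<and> v < g_nv g \<longrightarrow>
    coord (cvals (vec_alg L M) inp V (vertex_blocks L M b outs g off R) ! vertex_node off g v) (Suc b)
      = gate_path_sum g bits v mod int M"
proof (induction R)
  case (Suc R)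
  let ?V = "cvals (vec_alg L M) inp V (vertex_blocks L M b outs g off R)"
  let ?V' = "cvals (vec_alg L M) inp ?V (vertex_block L M b outs g off R (length (g_E g)))"
  let ?u = "g_nv g - 1 - R"
  have R: "R < g_nv g" using Suc.prems by simp
  have lenV: "length ?V = off + 1 + R * block_len g"
    using len by (simp add: length_vertex_blocks)
  have zero': "coord (?V ! off) (Suc b) = 0"
    using zero len by (simp add: nth_cvals_prefix)
  have later: "\<forall>v. ?u < v \<and> v < g_nv g \<longrightarrow> coord (?V ! vertex_node off g v) (Suc b) = gate_path_sum g bits v mod int M"
    using Suc R by auto
  have last: "coord (last ?V') (Suc b) = gate_path_sum g bits ?u mod int M"
    using coord_last_vertex_block_eq_path_sum[OF M L wf holds_bits_cvals[OF bits] lenV R zero' later] .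
  have "length ?V' = Suc (vertex_node off g ?u)"
    using lenV R by (simp add: length_vertex_block vertex_node_def block_len_def)
  then have top: "?V' ! vertex_node off g ?u = last ?V'"
    by (rule nth_eq_last)
  have below: "?V' ! vertex_node off g v = ?V ! vertex_node off g v" if "?u < v" "v < g_nv g" for v
    using vertex_node_less[OF that] lenV by (simp add: nth_cvals_prefix)
  have blocks: "cvals (vec_alg L M) inp V (vertex_blocks L M b outs g off (Suc R)) = ?V'"
    by (simp add: vertex_blocks_def cvals_append)
  show ?case
  proof (intro allI impI)
    fix v assume v: "g_nv g - Suc R \<le> v \<and> v < g_nv g"
    show "coord (cvals (vec_alg L M) inp V (vertex_blocks L M b outs g off (Suc R)) ! vertex_node off g v) (Suc b)
      = gate_path_sum g bits v mod int M"
    proof (cases "v = ?u")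
      case True
      then show ?thesis using blocks top last by simp
    next
      case False
      then have "?u < v" using v by linarith
      then show ?thesis using blocks below later v by simp
    qed
  qed
qed simp

definition accept_list :: "babp_gate \<Rightarrow> int list" where
  "accept_list g = sorted_list_of_set (g_T g)"

definition test_start :: "nat \<Rightarrow> babp_gate \<Rightarrow> nat" where
  "test_start off g = Suc off + g_nv g * block_len g"

definition test_step :: "nat \<Rightarrow> nat \<Rightarrow> nat \<Rightarrow> nat \<Rightarrow> babp_gate \<Rightarrow> nat \<Rightarrow> nat \<Rightarrow> nat cnode list" where
  "test_step L M b p g off s =
     (let t = test_start off g + 2 + 3 * s in
      [CConst (unit_vec L (Suc b) (accept_list g ! s)),
       CGate 0 [vertex_node off g 0, t, off],
       CGate (carry_gate M (Suc b) (Suc p)) [t - 1, Suc t, test_start off g]])"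

definition test_nodes :: "nat \<Rightarrow> nat \<Rightarrow> nat \<Rightarrow> nat \<Rightarrow> babp_gate \<Rightarrow> nat \<Rightarrow> nat \<Rightarrow> nat cnode list" where
  "test_nodes L M b p g off s =
     CConst (unit_vec L (Suc (Suc b)) 1) # CConst (unit_vec L 0 0) #
       concat (map (test_step L M b p g off) [0..<s])"

lemma length_test_nodes: "length (test_nodes L M b p g off s) = 2 + 3 * s"
  by (induction s) (auto simp: test_nodes_def test_step_def Let_def)

lemma test_nodes_Suc:
  "test_nodes L M b p g off (Suc s) = test_nodes L M b p g off s @ test_step L M b p g off s"
  by (simp add: test_nodes_def)

lemma mod_diff_mod_eq_0_iff:
  fixes x t :: int
  assumes "int p dvd int M" "0 \<le> t" "t < int p"
  shows "(x mod int M - t) mod int M mod int p = 0 \<longleftrightarrow> x mod int p = t"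
proof -
  have "(x mod int M - t) mod int M mod int p = (x - t) mod int p"
    using assms(1) by (simp add: mod_mod_cancel mod_diff_left_eq[of "x mod int M", symmetric] mod_diff_left_eq)
  also have "\<dots> = 0 \<longleftrightarrow> x mod int p = t mod int p"
    by (simp add: mod_eq_dvd_iff dvd_eq_mod_eq_0)
  finally show ?thesis using assms(2,3) by simp
qed

lemma coord_last_test_step:
  assumes L: "Suc (Suc b) < L" and p: "p \<le> M" and len: "length W = test_start off g + 2 + 3 * s"
  shows "coord (last (cvals (vec_alg L M) inp W (test_step L M b p g off s))) (Suc (Suc b)) =
    (coord (last W) (Suc (Suc b)) +
      of_bool ((coord (W ! vertex_node off g 0) (Suc b) - accept_list g ! s + coord (W ! off) (Suc b))
        mod int M mod int p = 0) * coord (W ! test_start off g) (Suc (Suc b))) mod int M"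
proof -
  let ?t = "test_start off g + 2 + 3 * s"
  let ?x = "unit_vec L (Suc b) (accept_list g ! s)"
  let ?W = "W @ [?x]"
  let ?y = "cnode_val (vec_alg L M) inp ?W (CGate 0 [vertex_node off g 0, ?t, off])"
  have idx: "vertex_node off g 0 < length W" "off < length W" "test_start off g < length W"
    using len by (simp_all add: vertex_node_def test_start_def)
  have "coord ?y (Suc b) = (coord (W ! vertex_node off g 0) (Suc b) - accept_list g ! s + coord (W ! off) (Suc b)) mod int M"
    using idx len L by (simp add: coord_malcev_node nth_append coord_unit_vec del: cnode_val.simps)
  moreover have "W ! (?t - 1) = last W"
    using len by (intro nth_eq_last) simp
  then have "(W @ [?x, ?y]) ! (?t - 1) = last W" "(W @ [?x, ?y]) ! Suc ?t = ?y"
    using len by (simp_all add: nth_append)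
  moreover have "(W @ [?x, ?y]) ! test_start off g = W ! test_start off g"
    using idx by (simp add: nth_append)
  moreover have "last (cvals (vec_alg L M) inp W (test_step L M b p g off s)) =
      cnode_val (vec_alg L M) inp (W @ [?x, ?y]) (CGate (carry_gate M (Suc b) (Suc p)) [?t - 1, Suc ?t, test_start off g])"
    by (simp add: test_step_def Let_def del: cnode_val.simps(3))
  moreover have "Suc b < L" "Suc p < M + 2" using L p by simp_all
  ultimately show ?thesis
    using L by (simp add: coord_carry_node carry_coeff_def del: cnode_val.simps)
qed

lemma test_nodes_correct:
  assumes M: "2 \<le> M" and L: "Suc (Suc b) < L" and p: "int p dvd int M"
    and T: "set (accept_list g) \<subseteq> {0..<int p}" and len: "length V = test_start off g"
    and P: "coord (V ! vertex_node off g 0) (Suc b) = P mod int M" and zero: "coord (V ! off) (Suc b) = 0"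
  shows "s \<le> length (accept_list g) \<Longrightarrow>
    coord (last (cvals (vec_alg L M) inp V (test_nodes L M b p g off s))) (Suc (Suc b)) =
    (\<Sum>s' < s. of_bool (P mod int p = accept_list g ! s')) mod int M"
proof (induction s)
  case 0
  show ?case using L by (simp add: test_nodes_def coord_unit_vec)
next
  case (Suc s)
  let ?W = "cvals (vec_alg L M) inp V (test_nodes L M b p g off s)"
  have s: "s < length (accept_list g)" using Suc.prems by simp
  have lenW: "length ?W = test_start off g + 2 + 3 * s"
    using len by (simp add: length_test_nodes)
  have old: "?W ! j = V ! j" if "j < length V" for j
    using that by (rule nth_cvals_prefix)
  have "?W ! test_start off g = unit_vec L (Suc (Suc b)) 1"
    using len by (simp add: test_nodes_def nth_cvals_prefix nth_append)
  moreover have "coord (?W ! vertex_node off g 0) (Suc b) = P mod int M" "coord (?W ! off) (Suc b) = 0"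
    using old P zero len by (simp_all add: vertex_node_def test_start_def)
  moreover have "(P mod int M - accept_list g ! s) mod int M mod int p = 0 \<longleftrightarrow> P mod int p = accept_list g ! s"
    using mod_diff_mod_eq_0_iff[OF p] T nth_mem[OF s] by (meson atLeastLessThan_iff subsetD)
  moreover have "p \<le> M"
    using p M by (simp add: dvd_imp_le)
  ultimately show ?case
    using coord_last_test_step[OF L _ lenW, where inp = inp] Suc s L
    by (simp add: test_nodes_Suc cvals_append coord_unit_vec mod_add_left_eq)
qed

definition gadget :: "nat \<Rightarrow> nat \<Rightarrow> nat \<Rightarrow> nat \<Rightarrow> nat list \<Rightarrow> babp_gate \<Rightarrow> nat \<Rightarrow> nat cnode list" where
  "gadget L M b p outs g off =
     CConst (unit_vec L 0 0) # vertex_blocks L M b outs g off (g_nv g) @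
       test_nodes L M b p g off (length (accept_list g))"

definition gadget_len :: "babp_gate \<Rightarrow> nat" where
  "gadget_len g = 3 + g_nv g * block_len g + 3 * length (accept_list g)"

lemma accept_list_facts:
  assumes "gate_wf p nb g"
  shows "distinct (accept_list g)" "set (accept_list g) = g_T g" "length (accept_list g) = card (g_T g)"
proof -
  have "finite (g_T g)"
    using assms unfolding gate_wf_def by (meson finite_atLeastLessThan_int finite_subset)
  then show "distinct (accept_list g)" "set (accept_list g) = g_T g" "length (accept_list g) = card (g_T g)"
    by (simp_all add: accept_list_def)
qed

lemma length_gadget [simp]: "length (gadget L M b p outs g off) = gadget_len g"
  by (simp add: gadget_def gadget_len_def length_vertex_blocks length_test_nodes)

lemma gate_out_iff_path_sum:
  assumes "gate_wf p nb g"
  shows "gate_out p g bits \<longleftrightarrow> gate_path_sum g bits 0 mod int p \<in> g_T g"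
proof -
  have "abp_wf p (g_nv g) (g_E g) (length (g_wires g))"
    using assms unfolding gate_wf_def by simp
  moreover have "(\<lambda>j. if bits ! (g_wires g ! j) then 1 else 0) = wire_vals g bits"
    by (simp add: wire_vals_def fun_eq_iff)
  ultimately show ?thesis
    unfolding gate_out_def gate_path_sum_def by (simp add: abp_val_eq_path_sum)
qed

lemma sum_of_bool_eq_distinct:
  "distinct xs \<Longrightarrow> (\<Sum>s < length xs. of_bool (v = xs ! s)) = (of_bool (v \<in> set xs) :: int)"
  by (induction xs rule: rev_induct) (auto simp: nth_append)

lemma gadget_correct:
  assumes M: "2 \<le> M" and L: "Suc (Suc b) < L" and p: "int p dvd int M"
    and wf: "gate_wf p (length bits) g" and bits: "holds_bits V b outs bits" and len: "length V = off"
  shows "coord (last (cvals (vec_alg L M) inp V (gadget L M b p outs g off))) (Suc (Suc b))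
    = of_bool (gate_out p g bits)"
proof -
  let ?V0 = "V @ [unit_vec L 0 0]"
  let ?VT = "cvals (vec_alg L M) inp ?V0 (vertex_blocks L M b outs g off (g_nv g))"
  let ?P = "gate_path_sum g bits 0"
  have zero: "coord (?V0 ! off) (Suc b) = 0"
    using len[symmetric] L by (simp add: coord_unit_vec)
  have "0 < g_nv g"
    using wf unfolding gate_wf_def abp_wf_def by simp
  then have "coord (?VT ! vertex_node off g 0) (Suc b) = ?P mod int M"
    using vertex_blocks_correct[OF M _ wf holds_bits_cvals[OF bits, where C = "[CConst (unit_vec L 0 0)]"]]
      zero len L by simp
  moreover have "coord (?VT ! off) (Suc b) = 0"
    using zero len by (simp add: nth_cvals_prefix)
  moreover have "length ?VT = test_start off g"
    using len by (simp add: length_vertex_blocks test_start_def)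
  moreover have "set (accept_list g) \<subseteq> {0..<int p}"
    using wf accept_list_facts(2)[OF wf] unfolding gate_wf_def by simp
  ultimately have "coord (last (cvals (vec_alg L M) inp ?VT (test_nodes L M b p g off (length (accept_list g)))))
      (Suc (Suc b)) = (\<Sum>s < length (accept_list g). of_bool (?P mod int p = accept_list g ! s)) mod int M"
    using test_nodes_correct[OF M L p, where inp = inp] by blast
  also have "\<dots> = of_bool (?P mod int p \<in> g_T g) mod int M"
    unfolding sum_of_bool_eq_distinct[OF accept_list_facts(1)[OF wf]] accept_list_facts(2)[OF wf] ..
  also have "\<dots> = of_bool (gate_out p g bits)"
    using M gate_out_iff_path_sum[OF wf] by simp
  finally show ?thesis
    by (simp add: gadget_def cvals_append)
qed

lemma node_wf_unit_vec: "0 \<le> c \<Longrightarrow> c < int M \<Longrightarrow> node_wf (vec_alg L M) n i (CConst (unit_vec L k c))"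
  by (simp add: node_wf_def vec_alg_def unit_vec_in_vec_carrier)

lemma node_wf_gate:
  "f < length (vec_ops L M) \<Longrightarrow> x < i \<Longrightarrow> y < i \<Longrightarrow> z < i \<Longrightarrow> node_wf (vec_alg L M) n i (CGate f [x, y, z])"
  using vec_ops_arity[of "fst (vec_ops L M ! f)" "snd (vec_ops L M ! f)" L M]
  by (simp add: node_wf_def vec_alg_def)

lemma edge_nodes_wf:
  assumes M: "0 < M" and L: "Suc b < L" and p: "p \<le> M" and wf: "gate_wf p (length outs) g"
    and outs: "\<forall>w \<in> set outs. w < off" and r: "r < g_nv g" and i: "i < length (g_E g)"
  shows "nodes_wf (vec_alg L M) n (off + 2 + r * block_len g + 2 * i) (edge_nodes L M b outs g off r i)"
proof -
  obtain u v l where e: "g_E g ! i = (u, v, l)" by (metis prod_cases3)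
  note edge = edge_facts[OF wf i e]
  have "carry_gate M b 0 < length (vec_ops L M)"
    using vec_ops_carry_gate(1)[of b L 0 M] L by simp
  moreover have "(case l of LVar j \<Rightarrow> outs ! (g_wires g ! j) | LConst _ \<Rightarrow> Suc (off + 1 + r * block_len g + 2 * i))
      < off + 3 + r * block_len g + 2 * i"
    using outs edge(3) by (cases l) (auto dest!: nth_mem)
  moreover have "(if u = g_nv g - 1 - r then vertex_node off g v else off) < off + 3 + r * block_len g + 2 * i"
    using vertex_node_less[of g r v off] edge(1,2) by auto
  moreover have "0 \<le> (case l of LConst c \<Rightarrow> c | LVar _ \<Rightarrow> 0) \<and> (case l of LConst c \<Rightarrow> c | LVar _ \<Rightarrow> 0) < int M"
    using edge(4) p M by (cases l) auto
  ultimately show ?thesis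
    unfolding edge_nodes_def Let_def e
    by (simp add: nodes_wf_Cons node_wf_unit_vec node_wf_gate)
qed

lemma vertex_blocks_wf:
  assumes M: "2 \<le> M" and L: "Suc b < L" and p: "p \<le> M" and wf: "gate_wf p (length outs) g"
    and outs: "\<forall>w \<in> set outs. w < off"
  shows "nodes_wf (vec_alg L M) n (Suc off) (vertex_blocks L M b outs g off (g_nv g))"
  unfolding vertex_blocks_def
proof (rule nodes_wf_concat_map)
  fix r assume r: "r < g_nv g"
  have "nodes_wf (vec_alg L M) n (Suc (off + 1 + r * block_len g))
      (concat (map (edge_nodes L M b outs g off r) [0..<length (g_E g)]))"
    by (rule nodes_wf_concat_map[where B = 2])
      (use edge_nodes_wf[OF _ L p wf outs r] M in \<open>simp add: algebra_simps\<close>)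
  moreover have "length (vertex_block L M b outs g off r (length (g_E g))) = block_len g"
    by (simp add: length_vertex_block block_len_def)
  ultimately show "length (vertex_block L M b outs g off r (length (g_E g))) = block_len g \<and>
      nodes_wf (vec_alg L M) n (Suc off + r * block_len g) (vertex_block L M b outs g off r (length (g_E g)))"
    using M by (simp add: vertex_block_def nodes_wf_Cons node_wf_unit_vec)
qed

lemma test_nodes_wf:
  assumes M: "2 \<le> M" and L: "Suc (Suc b) < L" and p: "p \<le> M" and wf: "gate_wf p nb g"
  shows "nodes_wf (vec_alg L M) n (test_start off g) (test_nodes L M b p g off (length (accept_list g)))"
proof -
  have "carry_gate M (Suc b) (Suc p) < length (vec_ops L M)"
    using vec_ops_carry_gate(1)[of "Suc b" L "Suc p" M] L p by simp
  moreover have "0 < length (vec_ops L M)"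
    by (simp add: vec_ops_def)
  moreover have "0 \<le> accept_list g ! s \<and> accept_list g ! s < int M" if "s < length (accept_list g)" for s
    using nth_mem[OF that] accept_list_facts(2)[OF wf] wf p unfolding gate_wf_def by force
  moreover have "vertex_node off g 0 < test_start off g" "off < test_start off g"
    by (simp_all add: vertex_node_def test_start_def)
  ultimately have "nodes_wf (vec_alg L M) n (test_start off g + 2)
      (concat (map (test_step L M b p g off) [0..<length (accept_list g)]))"
    by (intro nodes_wf_concat_map)
      (auto simp: test_step_def Let_def nodes_wf_Cons node_wf_unit_vec node_wf_gate algebra_simps)
  then show ?thesis
    using M by (simp add: test_nodes_def nodes_wf_Cons node_wf_unit_vec)
qed

lemma gadget_wf:
  assumes M: "2 \<le> M" and L: "Suc (Suc b) < L" and p: "p \<le> M" and wf: "gate_wf p (length outs) g"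
    and outs: "\<forall>w \<in> set outs. w < off"
  shows "nodes_wf (vec_alg L M) n off (gadget L M b p outs g off)"
  using vertex_blocks_wf[OF M _ p wf outs] test_nodes_wf[OF M L p wf] M L
  by (simp add: gadget_def nodes_wf_Cons nodes_wf_append node_wf_unit_vec length_vertex_blocks test_start_def)

section \<open>Simulating a layered circuit\<close>

fun layer_gadgets :: "nat \<Rightarrow> nat \<Rightarrow> nat \<Rightarrow> nat \<Rightarrow> nat list \<Rightarrow> nat \<Rightarrow> babp_gate list \<Rightarrow> nat cnode list" where
  "layer_gadgets L M b p outs off [] = []"
| "layer_gadgets L M b p outs off (g # gs) =
     gadget L M b p outs g off @ layer_gadgets L M b p outs (off + gadget_len g) gs"

fun layer_outputs :: "nat \<Rightarrow> babp_gate list \<Rightarrow> nat list" where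
  "layer_outputs off [] = []"
| "layer_outputs off (g # gs) = (off + gadget_len g - 1) # layer_outputs (off + gadget_len g) gs"

lemma length_layer_gadgets: "length (layer_gadgets L M b p outs off gs) = sum_list (map gadget_len gs)"
  by (induction gs arbitrary: off) auto

lemma length_layer_outputs [simp]: "length (layer_outputs off gs) = length gs"
  by (induction gs arbitrary: off) auto

lemma layer_outputs_less: "w \<in> set (layer_outputs off gs) \<Longrightarrow> w < off + sum_list (map gadget_len gs)"
  by (induction gs arbitrary: off) (fastforce simp: gadget_len_def)+

lemma holds_bits_Cons:
  "holds_bits V b (w # ws) (x # xs) \<longleftrightarrow>
     w < length V \<and> coord (V ! w) b = of_bool x \<and> holds_bits V b ws xs"
  unfolding holds_bits_def by (auto simp: nth_Cons split: nat.split)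

lemma layer_gadgets_correct:
  assumes M: "2 \<le> M" and L: "Suc (Suc b) < L" and p: "int p dvd int M"
  shows "\<forall>g \<in> set gs. gate_wf p (length bits) g \<Longrightarrow> holds_bits V b outs bits \<Longrightarrow>
    holds_bits (cvals (vec_alg L M) inp V (layer_gadgets L M b p outs (length V) gs))
      (Suc (Suc b)) (layer_outputs (length V) gs) (map (\<lambda>g. gate_out p g bits) gs)"
proof (induction gs arbitrary: V)
  case Nil
  then show ?case by (simp add: holds_bits_def)
next
  case (Cons g gs)
  let ?V = "cvals (vec_alg L M) inp V (gadget L M b p outs g (length V))"
  have len: "length ?V = Suc (length V + gadget_len g - 1)"
    by (simp add: gadget_len_def)
  have "coord (?V ! (length V + gadget_len g - 1)) (Suc (Suc b)) = of_bool (gate_out p g bits)"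
    using gadget_correct[OF M L p _ Cons.prems(2) refl] Cons.prems(1) nth_eq_last[OF len] by simp
  then have "holds_bits (cvals (vec_alg L M) inp ?V (layer_gadgets L M b p outs (length ?V) gs)) (Suc (Suc b))
      (layer_outputs (length V) (g # gs)) (map (\<lambda>g. gate_out p g bits) (g # gs))"
    using Cons.IH[of ?V] Cons.prems holds_bits_cvals[OF Cons.prems(2)] len
    by (simp add: holds_bits_Cons nth_cvals_prefix)
  then show ?case
    by (simp add: cvals_append)
qed

lemma layer_gadgets_wf:
  assumes M: "2 \<le> M" and L: "Suc (Suc b) < L" and p: "p \<le> M"
  shows "\<forall>g \<in> set gs. gate_wf p (length outs) g \<Longrightarrow> \<forall>w \<in> set outs. w < off \<Longrightarrow>
    nodes_wf (vec_alg L M) n off (layer_gadgets L M b p outs off gs)"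
proof (induction gs arbitrary: off)
  case (Cons g gs)
  then show ?case
    using gadget_wf[OF M L p] by (auto simp: nodes_wf_append trans_less_add1)
qed simp

fun compile :: "nat \<Rightarrow> nat \<Rightarrow> nat \<Rightarrow> nat list \<Rightarrow> babp_gate list list \<Rightarrow> nat cnode list \<times> nat list" where
  "compile L M n (p # ps) (Lay # Ls) =
     (let below = (if Ls = [] then (map CIn [0..<n], [0..<n]) else compile L M n ps Ls)
      in (fst below @ layer_gadgets L M (2 * length Ls) p (snd below) (length (fst below)) Lay,
          layer_outputs (length (fst below)) Lay))"
| "compile L M n _ _ = ([], [])"

definition input_vec :: "nat \<Rightarrow> bool \<Rightarrow> nat" where
  "input_vec L x = unit_vec L 0 (of_bool x)"

lemma layers_wf_Cons_iff:
  "layers_wf ps (Lay # Ls) n \<longleftrightarrow> (\<exists>p ps'. ps = p # ps' \<and> layers_wf ps' Ls n \<and>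
     (\<forall>g \<in> set Lay. gate_wf p (if Ls = [] then n else length (hd Ls)) g))"
  by (cases ps) auto

lemma length_layers_eval: "layers_wf ps Ls n \<Longrightarrow> Ls \<noteq> [] \<Longrightarrow> length (layers_eval ps Ls x) = length (hd Ls)"
  by (cases ps; cases Ls) auto

lemma compile_correct:
  assumes M: "2 \<le> M" and x: "length x = n"
  shows "layers_wf ps Ls n \<Longrightarrow> Ls \<noteq> [] \<Longrightarrow> 2 * length Ls < L \<Longrightarrow> \<forall>p \<in> set ps. int p dvd int M \<Longrightarrow>
    holds_bits (cvals (vec_alg L M) (\<lambda>i. input_vec L (x ! i)) [] (fst (compile L M n ps Ls)))
      (2 * length Ls) (snd (compile L M n ps Ls)) (layers_eval ps Ls x)"
proof (induction Ls arbitrary: ps)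
  case (Cons Lay Ls)
  obtain p ps' where ps: "ps = p # ps'" and wf: "layers_wf ps' Ls n"
    and gates: "\<forall>g \<in> set Lay. gate_wf p (if Ls = [] then n else length (hd Ls)) g"
    using Cons.prems(1) by (auto simp: layers_wf_Cons_iff)
  let ?below = "if Ls = [] then (map CIn [0..<n], [0..<n]) else compile L M n ps' Ls"
  let ?bits = "if Ls = [] then x else layers_eval ps' Ls x"
  let ?inp = "\<lambda>i. input_vec L (x ! i)"
  obtain C outs where below: "?below = (C, outs)" by fastforce
  have "holds_bits (cvals (vec_alg L M) ?inp [] C) (2 * length Ls) outs ?bits"
  proof (cases "Ls = []")
    case True
    then have "C = map CIn [0..<n]" "outs = [0..<n]"
      using below by auto
    then show ?thesis
      using True x Cons.prems(3) by (simp add: holds_bits_def cvals_map_CIn input_vec_def coord_unit_vec)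
  next
    case False
    then show ?thesis using Cons.IH[OF wf] Cons.prems ps below by simp
  qed
  moreover have "\<forall>g \<in> set Lay. gate_wf p (length ?bits) g"
    using gates x length_layers_eval[OF wf] by auto
  moreover have "Suc (Suc (2 * length Ls)) < L" "int p dvd int M"
    using Cons.prems(3,4) ps by auto
  moreover have "compile L M n ps (Lay # Ls) =
      (C @ layer_gadgets L M (2 * length Ls) p outs (length C) Lay, layer_outputs (length C) Lay)"
    unfolding ps compile.simps Let_def below by simp
  moreover have "layers_eval ps (Lay # Ls) x = map (\<lambda>g. gate_out p g ?bits) Lay"
    using ps by simp
  ultimately show ?case
    using layer_gadgets_correct[OF M, where inp = ?inp and V = "cvals (vec_alg L M) ?inp [] C"]
    by (simp add: cvals_append)
qed simp

lemma compile_wf: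
  assumes M: "2 \<le> M"
  shows "layers_wf ps Ls n \<Longrightarrow> Ls \<noteq> [] \<Longrightarrow> 2 * length Ls < L \<Longrightarrow> \<forall>p \<in> set ps. p \<le> M \<Longrightarrow>
    nodes_wf (vec_alg L M) n 0 (fst (compile L M n ps Ls)) \<and>
    (\<forall>w \<in> set (snd (compile L M n ps Ls)). w < length (fst (compile L M n ps Ls))) \<and>
    length (snd (compile L M n ps Ls)) = length (hd Ls)"
proof (induction Ls arbitrary: ps)
  case (Cons Lay Ls)
  obtain p ps' where ps: "ps = p # ps'" and wf: "layers_wf ps' Ls n"
    and gates: "\<forall>g \<in> set Lay. gate_wf p (if Ls = [] then n else length (hd Ls)) g"
    using Cons.prems(1) by (auto simp: layers_wf_Cons_iff)
  let ?below = "if Ls = [] then (map CIn [0..<n], [0..<n]) else compile L M n ps' Ls"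
  have "nodes_wf (vec_alg L M) n 0 (fst ?below) \<and> (\<forall>w \<in> set (snd ?below). w < length (fst ?below)) \<and>
      length (snd ?below) = (if Ls = [] then n else length (hd Ls))"
    using Cons.IH[OF wf] Cons.prems ps by (auto simp: nodes_wf_def node_wf_def)
  moreover have "Suc (Suc (2 * length Ls)) < L" "p \<le> M"
    using Cons.prems(3,4) ps by auto
  ultimately show ?case
    using layer_gadgets_wf[OF M, where gs = Lay and outs = "snd ?below" and off = "length (fst ?below)"]
      gates layer_outputs_less[of _ "length (fst ?below)" Lay] ps
    by (auto simp: Let_def nodes_wf_append length_layer_gadgets)
qed simp

lemma length_compile:
  "layers_wf ps Ls n \<Longrightarrow> Ls \<noteq> [] \<Longrightarrow>
    length (fst (compile L M n ps Ls)) = n + sum_list (map gadget_len (concat Ls))"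
proof (induction Ls arbitrary: ps)
  case (Cons Lay Ls)
  then show ?case
    by (cases ps) (auto simp: Let_def length_layer_gadgets)
qed simp

lemma compile_single_output:
  assumes "layers_wf ps Ls n" "Ls \<noteq> []" "length (hd Ls) = 1"
  shows "snd (compile L M n ps Ls) = [length (fst (compile L M n ps Ls)) - 1]"
  using assms by (cases ps; cases Ls) (auto simp: Let_def length_Suc_conv length_layer_gadgets)

lemma compile_accepts:
  assumes M: "2 \<le> M" and wf: "layers_wf ps Ls n" "Ls \<noteq> []" "length (hd Ls) = 1"
    and L: "2 * length Ls < L" and ps: "\<forall>p \<in> set ps. int p dvd int M" and x: "length x = n"
  shows "circ_eval (vec_alg L M) (\<lambda>i. input_vec L (x ! i)) (fst (compile L M n ps Ls))
      \<in> {y \<in> vec_carrier L M. coord y (2 * length Ls) = 1} \<longleftrightarrow> hd (layers_eval ps Ls x)"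
proof -
  let ?C = "fst (compile L M n ps Ls)"
  let ?V = "cvals (vec_alg L M) (\<lambda>i. input_vec L (x ! i)) [] ?C"
  have "\<forall>p \<in> set ps. p \<le> M"
    using ps M by (auto intro: dvd_imp_le)
  then have C: "nodes_wf (vec_alg L M) n 0 ?C" "?C \<noteq> []"
    using compile_wf[OF M wf(1,2) L] compile_single_output[OF wf] by auto
  have "range (\<lambda>i. input_vec L (x ! i)) \<subseteq> alg_carrier (vec_alg L M)"
    using M by (auto simp: input_vec_def vec_alg_def intro: unit_vec_in_vec_carrier)
  then have "set ?V \<subseteq> vec_carrier L M"
    using set_cvals_subset_carrier[OF finite_vec_alg, where acc = "[]"] C(1) M by (simp add: vec_alg_def)
  moreover have ne: "?V \<noteq> []"
    using C(2) length_cvals[of "vec_alg L M" _ "[]" ?C] by (metis add_0 length_0_conv)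
  ultimately have "last ?V \<in> vec_carrier L M"
    using last_in_set by blast
  moreover obtain y where y: "layers_eval ps Ls x = [y]"
    using length_layers_eval[OF wf(1,2)] wf(3) by (auto simp: length_Suc_conv)
  have "holds_bits ?V (2 * length Ls) [length ?C - 1] [y]"
    using compile_correct[OF M x wf(1,2) L ps] compile_single_output[OF wf, where L = L and M = M] y by simp
  then have "coord (?V ! (length ?C - 1)) (2 * length Ls) = of_bool y"
    by (simp add: holds_bits_Cons)
  moreover have "?V ! (length ?C - 1) = last ?V"
    using ne by (simp add: last_conv_nth)
  ultimately show ?thesis
    unfolding circ_eval_def using y by simp
qed

lemma sum_list_squares_le: "sum_list (map (\<lambda>x. f x ^ 2) xs) \<le> sum_list (map f xs) ^ 2" for f :: "'a \<Rightarrow> nat"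
  by (induction xs) (auto simp: power2_eq_square algebra_simps)

lemma gadget_len_le:
  assumes wf: "gate_wf p nb g" and p: "p \<le> M"
  shows "gadget_len g \<le> (5 + 3 * M) * (length (g_wires g) + gate_size g) ^ 2"
proof -
  let ?s = "g_nv g + length (g_E g)"
  have "card (g_T g) \<le> card {0..<int p}"
    using wf unfolding gate_wf_def by (intro card_mono) simp_all
  then have T: "length (accept_list g) \<le> M"
    using accept_list_facts(3)[OF wf] p by simp
  have "1 \<le> ?s ^ 2"
    using wf unfolding gate_wf_def abp_wf_def by simp
  then have "3 \<le> 3 * ?s ^ 2" "M \<le> M * ?s ^ 2"
    by simp_all
  moreover have "g_nv g * block_len g \<le> ?s * (2 * ?s)"
    using wf unfolding gate_wf_def abp_wf_def block_len_def by (intro mult_le_mono) auto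
  ultimately have "gadget_len g \<le> (5 + 3 * M) * ?s ^ 2"
    using T unfolding gadget_len_def power2_eq_square by (simp add: algebra_simps)
  also have "\<dots> \<le> (5 + 3 * M) * (length (g_wires g) + gate_size g) ^ 2"
    by (simp add: gate_size_def power_mono)
  finally show ?thesis .
qed

lemma compile_size:
  assumes M: "2 \<le> M" and wf: "layers_wf ps Ls n" "Ls \<noteq> []" and L: "2 * length Ls < L"
    and ps: "\<forall>p \<in> set ps. p \<le> M"
  shows "circ_size (fst (compile L M n ps Ls)) \<le> 4 * (n + (5 + 3 * M) * layers_size Ls ^ 2)"
proof -
  let ?C = "fst (compile L M n ps Ls)"
  let ?size = "\<lambda>g. length (g_wires g) + gate_size g"
  have gates: "\<exists>p \<in> set ps. \<exists>nb. gate_wf p nb g" if "g \<in> set (concat Ls)" for g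
    using wf(1) that by (induction ps Ls n rule: layers_wf.induct) auto
  have "sum_list (map gadget_len (concat Ls)) \<le> sum_list (map (\<lambda>g. (5 + 3 * M) * ?size g ^ 2) (concat Ls))"
    using gadget_len_le gates ps by (intro sum_list_mono) blast
  also have "\<dots> \<le> (5 + 3 * M) * sum_list (map ?size (concat Ls)) ^ 2"
    using sum_list_squares_le[of ?size "concat Ls"] by (simp add: sum_list_const_mult)
  also have "sum_list (map ?size (concat Ls)) = layers_size Ls"
    unfolding layers_size_def by (induction Ls) auto
  finally have "length ?C \<le> n + (5 + 3 * M) * layers_size Ls ^ 2"
    using length_compile[OF wf] by simp
  moreover have "sum_list (map cnode_edges ?C) \<le> 3 * length ?C"
    using compile_wf[OF M wf L ps] vec_ops_arity by (intro sum_edges_le) (auto simp: vec_alg_def)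
  ultimately show ?thesis
    unfolding circ_size_def by simp
qed

lemma poly_square_bound:
  fixes n S c k K :: nat
  assumes n: "1 \<le> n" and S: "S \<le> c * n ^ k + c"
  shows "4 * (n + K * S ^ 2) \<le> (4 + 16 * K * c ^ 2) * n ^ (2 * k + 1)"
proof -
  have "c \<le> c * n ^ k"
    using n by simp
  moreover have "2 * c * n ^ k = c * n ^ k + c * n ^ k"
    by simp
  ultimately have "S \<le> 2 * c * n ^ k"
    using S by linarith
  then have "S ^ 2 \<le> (2 * c * n ^ k) ^ 2"
    by (intro power_mono) simp_all
  also have "\<dots> = 4 * c ^ 2 * n ^ (2 * k)"
    by (simp add: power_mult_distrib power_mult mult.commute)
  also have "\<dots> \<le> 4 * c ^ 2 * n ^ (2 * k + 1)"
    using n by (simp add: power_increasing)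
  finally have "K * S ^ 2 \<le> K * (4 * c ^ 2 * n ^ (2 * k + 1))"
    by simp
  then have "n + K * S ^ 2 \<le> n ^ (2 * k + 1) + K * (4 * c ^ 2 * n ^ (2 * k + 1))"
    using n by (intro add_mono) (simp_all add: self_le_power)
  then have "4 * (n + K * S ^ 2) \<le> 4 * (n ^ (2 * k + 1) + K * (4 * c ^ 2 * n ^ (2 * k + 1)))"
    by (rule mult_le_mono2)
  also have "\<dots> = (4 + 16 * K * c ^ 2) * n ^ (2 * k + 1)"
    by (simp add: algebra_simps)
  finally show ?thesis .
qed

lemma length_layers_wf: "layers_wf ps Ls n \<Longrightarrow> length Ls = length ps"
  by (induction ps Ls n rule: layers_wf.induct) auto

lemma nuDet_subset_nuP_vec_alg:
  assumes M: "2 \<le> M" and ps: "\<forall>p \<in> set ps. int p dvd int M" and L: "2 * length ps < L"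
  shows "nuDet ps \<subseteq> nuP (vec_alg L M)"
proof
  fix Lang assume "Lang \<in> nuDet ps"
  then obtain C c k where C: "\<forall>n. C n \<noteq> [] \<and> length (hd (C n)) = 1 \<and> layers_wf ps (C n) n \<and>
      layers_size (C n) \<le> c * n ^ k + c \<and> (\<forall>x. length x = n \<longrightarrow> (x \<in> Lang \<longleftrightarrow> hd (layers_eval ps (C n) x)))"
    unfolding nuDet_def by blast
  let ?t = "\<lambda>n. fst (compile L M n ps (C n))"
  let ?S = "{y \<in> vec_carrier L M. coord y (2 * length ps) = 1}"
  define c' where "c' = 4 + 16 * (5 + 3 * M) * c ^ 2"
  have lenC: "length (C n) = length ps" for n
    using C length_layers_wf by blast
  have psM: "\<forall>p \<in> set ps. p \<le> M"
    using ps M by (auto intro: dvd_imp_le)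
  have wf: "layers_wf ps (C n) n" "C n \<noteq> []" "length (hd (C n)) = 1" "2 * length (C n) < L" for n
    using C lenC L by auto
  have "wf_circ (vec_alg L M) n (?t n) \<and> circ_size (?t n) \<le> c' * n ^ (2 * k + 1) + c'" if "1 \<le> n" for n
  proof
    have "n \<le> length (?t n)"
      using length_compile[OF wf(1,2), where L = L and M = M] by simp
    then show "wf_circ (vec_alg L M) n (?t n)"
      unfolding wf_circ_iff_nodes_wf using compile_wf[OF M wf(1,2,4) psM] that by auto
    have "circ_size (?t n) \<le> 4 * (n + (5 + 3 * M) * layers_size (C n) ^ 2)"
      using compile_size[OF M wf(1,2,4) psM] .
    also have "\<dots> \<le> c' * n ^ (2 * k + 1)"
      unfolding c'_def using poly_square_bound[OF that] C by blast
    finally show "circ_size (?t n) \<le> c' * n ^ (2 * k + 1) + c'"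
      by simp
  qed
  moreover have "x \<in> Lang \<longleftrightarrow> circ_eval (vec_alg L M) (\<lambda>i. input_vec L (x ! i)) (?t (length x)) \<in> ?S" for x
    using compile_accepts[OF M wf ps refl] C lenC by simp
  moreover have "range (input_vec L) \<subseteq> vec_carrier L M"
    using M by (auto simp: input_vec_def intro: unit_vec_in_vec_carrier)
  ultimately show "Lang \<in> nuP (vec_alg L M)"
    unfolding nuP_def mem_Collect_eq
    by (intro exI[of _ ?t] exI[of _ "input_vec L"] exI[of _ ?S] exI[of _ c'] exI[of _ "2 * k + 1"])
      (simp add: vec_alg_def)
qed

theorem mainTheorem10:
  fixes ps :: "nat list"
  assumes "\<forall>p \<in> set ps. prime p"
  shows "\<exists>A :: nat algebra. finite_algebra A \<and> solvable_alg A \<and> has_malcev A \<and>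
           nuDet ps \<subseteq> nuP A"
proof -
  define M where "M = 2 * prod_list ps"
  \<comment> \<open>the factor 2 only guarantees \<open>2 \<le> M\<close> when \<open>ps = []\<close>\<close>
  have "prod_list ps \<noteq> 0"
    using assms by (auto simp: prod_list_zero_iff)
  then have M: "2 \<le> M"
    unfolding M_def by simp
  have "\<forall>p \<in> set ps. int p dvd int M"
    unfolding M_def by (simp add: prod_list_dvd)
  then have "nuDet ps \<subseteq> nuP (vec_alg (2 * length ps + 1) M)"
    using nuDet_subset_nuP_vec_alg[OF M] by simp
  then show ?thesis
    using finite_vec_alg[of M] solvable_vec_alg[of M] has_malcev_vec_alg M
    by (intro exI[of _ "vec_alg (2 * length ps + 1) M"]) simp
qed

end
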